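(* A $\star$-metric space $(X,d^\star)$ is compact (i.e. $(X,\mathscr{T}_{d^\star})$ is a compact topological space) if and only if $(X,d^\star)$ is complete and totally bounded.
   Context: A $t$-definer is a function $\star:[0,\infty)\times[0,\infty)\to[0,\infty)$ such that for all $a,b,c\ge 0$: $a\star b=b\star a$; $a\star(b\star c)=(a\star b)\star c$; if $a\le b$ then $a\star c\le b\star c$; $a\star 0=a$; and $\star$ is continuous in its first variable with respect to the Euclidean topology. Given a nonempty set $X$ and a $t$-definer $\star$, a $\star$-metric on $X$ is a function $d^\star:X\times X\to[0,\infty)$ such that for all $x,y,z\in X$: $d^\star(x,y)=0$ iff $x=y$; $d^\star(x,y)=d^\star(y,x)$; and $d^\star(x,y)\le d^\star(x,z)\star d^\star(z,y)$. Put $B_{d^\star}(a,r)=\{x\in X: d^\star(a,x)<r\}$ and let $\mathscr{T}_{d^\star}$ be the topology consisting of all $U\subseteq X$ such that for each $a\in U$ some $B_{d^\star}(a,r)$, $r>0$, is contained in $U$. $(X,d^\star)$ is totally bounded if for every $\epsilon>0$ there is a finite $F\subseteq X$ with $X=\bigcup_{x\in F}B_{d^\star}(x,\epsilon)$. A sequence $\{x_n\}$ is Cauchy if for every $\epsilon>0$ there is $k$ with $d^\star(x_n,x_m)<\epsilon$ for all $m,n\ge k$; it converges to $x$ if for every $\epsilon>0$ there is $k$ with $d^\star(x,x_n)<\epsilon$ for $n\ge k$. $(X,d^\star)$ is complete if every Cauchy sequence converges to a point of $X$. *)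

theory Defs
  imports "HOL-Analysis.Analysis"
begin

text \<open>A t-definer: a binary operation on [0,\<infinity>) (represented as a real function,
  only its values on nonnegative arguments matter).\<close>
definition t_definer :: "(real \<Rightarrow> real \<Rightarrow> real) \<Rightarrow> bool" where
  "t_definer star \<longleftrightarrow>
     (\<forall>a\<ge>0. \<forall>b\<ge>0. star a b \<ge> 0) \<and>
     (\<forall>a\<ge>0. \<forall>b\<ge>0. star a b = star b a) \<and>
     (\<forall>a\<ge>0. \<forall>b\<ge>0. \<forall>c\<ge>0. star a (star b c) = star (star a b) c) \<and>
     (\<forall>a\<ge>0. \<forall>b\<ge>0. \<forall>c\<ge>0. a \<le> b \<longrightarrow> star a c \<le> star b c) \<and>
     (\<forall>a\<ge>0. star a 0 = a) \<and>
     (\<forall>c\<ge>0. continuous_on {0..} (\<lambda>a. star a c))"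

definition star_metric :: "(real \<Rightarrow> real \<Rightarrow> real) \<Rightarrow> 'a set \<Rightarrow> ('a \<Rightarrow> 'a \<Rightarrow> real) \<Rightarrow> bool" where
  "star_metric star X d \<longleftrightarrow>
     (\<forall>x\<in>X. \<forall>y\<in>X. d x y \<ge> 0) \<and>
     (\<forall>x\<in>X. \<forall>y\<in>X. d x y = 0 \<longleftrightarrow> x = y) \<and>
     (\<forall>x\<in>X. \<forall>y\<in>X. d x y = d y x) \<and>
     (\<forall>x\<in>X. \<forall>y\<in>X. \<forall>z\<in>X. d x y \<le> star (d x z) (d z y))"

definition sball :: "'a set \<Rightarrow> ('a \<Rightarrow> 'a \<Rightarrow> real) \<Rightarrow> 'a \<Rightarrow> real \<Rightarrow> 'a set" where
  "sball X d a r = {x\<in>X. d a x < r}"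

definition star_topology :: "'a set \<Rightarrow> ('a \<Rightarrow> 'a \<Rightarrow> real) \<Rightarrow> 'a topology" where
  "star_topology X d = topology (\<lambda>U. U \<subseteq> X \<and> (\<forall>a\<in>U. \<exists>r>0. sball X d a r \<subseteq> U))"

definition star_totally_bounded :: "'a set \<Rightarrow> ('a \<Rightarrow> 'a \<Rightarrow> real) \<Rightarrow> bool" where
  "star_totally_bounded X d \<longleftrightarrow>
     (\<forall>\<epsilon>>0. \<exists>F. finite F \<and> F \<subseteq> X \<and> X = (\<Union>x\<in>F. sball X d x \<epsilon>))"

definition star_Cauchy :: "'a set \<Rightarrow> ('a \<Rightarrow> 'a \<Rightarrow> real) \<Rightarrow> (nat \<Rightarrow> 'a) \<Rightarrow> bool" where
  "star_Cauchy X d s \<longleftrightarrow> (\<forall>n. s n \<in> X) \<and>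
     (\<forall>\<epsilon>>0. \<exists>k. \<forall>m\<ge>k. \<forall>n\<ge>k. d (s n) (s m) < \<epsilon>)"

definition star_converges :: "'a set \<Rightarrow> ('a \<Rightarrow> 'a \<Rightarrow> real) \<Rightarrow> (nat \<Rightarrow> 'a) \<Rightarrow> 'a \<Rightarrow> bool" where
  "star_converges X d s x \<longleftrightarrow> (\<forall>\<epsilon>>0. \<exists>k. \<forall>n\<ge>k. d x (s n) < \<epsilon>)"

definition star_complete :: "'a set \<Rightarrow> ('a \<Rightarrow> 'a \<Rightarrow> real) \<Rightarrow> bool" where
  "star_complete X d \<longleftrightarrow> (\<forall>s. star_Cauchy X d s \<longrightarrow> (\<exists>x\<in>X. star_converges X d s x))"

end

theory Submission
  imports Defs
begin

text \<open>The t-definer axioms enter only through two continuity facts at \<open>0\<close>: if \<open>s < r\<close> then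
  \<open>s \<star> c < r\<close> for all small \<open>c \<ge> 0\<close>, so balls are open; and \<open>a \<star> b\<close> is small whenever \<open>a\<close>
  and \<open>b\<close> are, which replaces the \<open>\<epsilon>/2\<close>-argument of metric spaces. A compact space has finite covers by balls of arbitrary radii, hence is
  totally bounded, and every sequence has a cluster point, to which a Cauchy sequence converges.
  Conversely, if an open cover had no finite subcover, total boundedness yields a decreasing
  sequence of sets, the \<open>n\<close>-th inside a ball of radius \<open>1/(n+1)\<close>, none of them finitely
  covered; points chosen from them form a Cauchy sequence, and the member of the cover
  containing its limit already contains one of these sets.\<close>

lemma t_definer_less_near_0:
  assumes "t_definer star" and "0 \<le> s" and "s < r"
  shows "\<exists>e>0. \<forall>c. 0 \<le> c \<and> c < e \<longrightarrow> star s c < r"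
proof -
  have comm: "\<forall>a\<ge>0. \<forall>b\<ge>0. star a b = star b a" and unit: "star 0 s = s"
    and cont: "continuous_on {0..} (\<lambda>a. star a s)"
    using assms unfolding t_definer_def by auto
  obtain e where e: "e > 0" "\<forall>c\<in>{0..}. dist c 0 < e \<longrightarrow> dist (star c s) (star 0 s) < r - s"
    using cont[unfolded continuous_on_iff, rule_format, of 0 "r - s"] \<open>s < r\<close> by auto
  have "star s c < r" if "0 \<le> c" "c < e" for c
    using e(2)[rule_format, of c] that comm \<open>0 \<le> s\<close> unit by (auto simp: dist_real_def)
  with e(1) show ?thesis by blast
qed

lemma t_definer_less_both_near_0:
  assumes "t_definer star" and "\<epsilon> > 0"
  shows "\<exists>\<delta>>0. \<forall>a b. 0 \<le> a \<and> a < \<delta> \<and> 0 \<le> b \<and> b < \<delta> \<longrightarrow> star a b < \<epsilon>"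
proof -
  have comm: "\<forall>a\<ge>0. \<forall>b\<ge>0. star a b = star b a"
    and mono: "\<forall>a\<ge>0. \<forall>b\<ge>0. \<forall>c\<ge>0. a \<le> b \<longrightarrow> star a c \<le> star b c"
    using assms(1) unfolding t_definer_def by auto
  obtain e where e: "e > 0" "\<forall>c. 0 \<le> c \<and> c < e \<longrightarrow> star (\<epsilon>/2) c < \<epsilon>"
    using t_definer_less_near_0[OF assms(1), of "\<epsilon>/2" \<epsilon>] assms(2) by auto
  have "star a b < \<epsilon>" if "0 \<le> a" "a < min e (\<epsilon>/2)" "0 \<le> b" "b < min e (\<epsilon>/2)" for a b
  proof -
    have "star a b = star b a" using comm that by auto
    also have "\<dots> \<le> star (\<epsilon>/2) a" using mono that by auto
    also have "\<dots> < \<epsilon>" using e that by auto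
    finally show ?thesis .
  qed
  then show ?thesis using e(1) assms(2) by (intro exI[of _ "min e (\<epsilon>/2)"]) auto
qed

lemma istopology_star_open: "istopology (\<lambda>U. U \<subseteq> X \<and> (\<forall>a\<in>U. \<exists>r>0. sball X d a r \<subseteq> U))"
proof -
  let ?L = "\<lambda>U. U \<subseteq> X \<and> (\<forall>a\<in>U. \<exists>r>0. sball X d a r \<subseteq> U)"
  have Int: "?L (S \<inter> T)" if S: "?L S" and T: "?L T" for S T
  proof -
    have "\<exists>r>0. sball X d a r \<subseteq> S \<inter> T" if "a \<in> S \<inter> T" for a
    proof -
      obtain r1 r2 where "r1 > 0" "sball X d a r1 \<subseteq> S" "r2 > 0" "sball X d a r2 \<subseteq> T"
        using S T \<open>a \<in> S \<inter> T\<close> by blast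
      then show ?thesis
        by (intro exI[of _ "min r1 r2"]) (auto simp: sball_def)
    qed
    with S show ?thesis
      by blast
  qed
  have Union: "?L (\<Union>K)" if K: "\<forall>S\<in>K. ?L S" for K
  proof -
    have "\<exists>r>0. sball X d a r \<subseteq> \<Union>K" if "a \<in> \<Union>K" for a
    proof -
      obtain S where "S \<in> K" "a \<in> S"
        using \<open>a \<in> \<Union>K\<close> by blast
      with K obtain r where "r > 0" "sball X d a r \<subseteq> S"
        by blast
      with \<open>S \<in> K\<close> show ?thesis
        by blast
    qed
    with K show ?thesis
      by blast
  qed
  show ?thesis
    unfolding istopology_def
    by (rule conjI; intro allI impI; rule Int Union; assumption)
qed

lemma openin_star_topology:
  "openin (star_topology X d) U \<longleftrightarrow> U \<subseteq> X \<and> (\<forall>a\<in>U. \<exists>r>0. sball X d a r \<subseteq> U)"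
  unfolding star_topology_def topology_inverse'[OF istopology_star_open] ..

lemma topspace_star_topology: "topspace (star_topology X d) = X"
proof
  show "topspace (star_topology X d) \<subseteq> X"
    using openin_topspace[of "star_topology X d"] unfolding openin_star_topology by blast
  have "openin (star_topology X d) X"
    unfolding openin_star_topology by (auto simp: sball_def intro: exI[of _ 1])
  then show "X \<subseteq> topspace (star_topology X d)"
    by (rule openin_subset)
qed

definition finitely_covered :: "'a set set \<Rightarrow> 'a set \<Rightarrow> bool" where
  "finitely_covered \<U> A \<longleftrightarrow> (\<exists>\<F>. finite \<F> \<and> \<F> \<subseteq> \<U> \<and> A \<subseteq> \<Union>\<F>)"

lemma finitely_covered_UN:
  assumes "finite G" and "\<forall>x\<in>G. finitely_covered \<U> (B x)"
  shows "finitely_covered \<U> (\<Union>x\<in>G. B x)"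
proof -
  obtain \<F> where \<F>: "\<And>x. x \<in> G \<Longrightarrow> finite (\<F> x) \<and> \<F> x \<subseteq> \<U> \<and> B x \<subseteq> \<Union>(\<F> x)"
    using assms(2) unfolding finitely_covered_def by metis
  show ?thesis
    unfolding finitely_covered_def
  proof (intro exI conjI)
    show "finite (\<Union>(\<F> ` G))"
      using assms(1) \<F> by simp
    show "\<Union>(\<F> ` G) \<subseteq> \<U>"
      using \<F> by blast
    show "(\<Union>x\<in>G. B x) \<subseteq> \<Union>(\<Union>(\<F> ` G))"
      using \<F> by fastforce
  qed
qed

lemma compact_space_star_topology:
  "compact_space (star_topology X d) \<longleftrightarrow>
     (\<forall>\<U>. (\<forall>U\<in>\<U>. openin (star_topology X d) U) \<and> X \<subseteq> \<Union>\<U> \<longrightarrow> finitely_covered \<U> X)"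
  by (simp add: compact_space_alt topspace_star_topology finitely_covered_def)

locale star_metric_space =
  fixes star :: "real \<Rightarrow> real \<Rightarrow> real" and X :: "'a set" and d :: "'a \<Rightarrow> 'a \<Rightarrow> real"
  assumes t_definer: "t_definer star" and star_metric: "star_metric star X d"
begin

lemma nonneg: "x \<in> X \<Longrightarrow> y \<in> X \<Longrightarrow> 0 \<le> d x y"
  using star_metric unfolding star_metric_def by simp

lemma zero [simp]: "x \<in> X \<Longrightarrow> d x x = 0"
  using star_metric unfolding star_metric_def by simp

lemma commute: "x \<in> X \<Longrightarrow> y \<in> X \<Longrightarrow> d x y = d y x"
  using star_metric unfolding star_metric_def by metis

lemma triangle: "x \<in> X \<Longrightarrow> y \<in> X \<Longrightarrow> z \<in> X \<Longrightarrow> d x y \<le> star (d x z) (d z y)"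
  using star_metric unfolding star_metric_def by metis

lemma triangle_small:
  assumes "\<epsilon> > 0"
  shows "\<exists>\<delta>>0. \<forall>x\<in>X. \<forall>y\<in>X. \<forall>z\<in>X. d x z < \<delta> \<longrightarrow> d z y < \<delta> \<longrightarrow> d x y < \<epsilon>"
proof -
  obtain \<delta> where \<delta>: "\<delta> > 0" "\<forall>a b. 0 \<le> a \<and> a < \<delta> \<and> 0 \<le> b \<and> b < \<delta> \<longrightarrow> star a b < \<epsilon>"
    using t_definer_less_both_near_0[OF t_definer assms] by blast
  have "d x y < \<epsilon>" if "x \<in> X" "y \<in> X" "z \<in> X" "d x z < \<delta>" "d z y < \<delta>" for x y z
  proof -
    have "d x y \<le> star (d x z) (d z y)"
      using triangle that by blast
    also have "\<dots> < \<epsilon>"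
      using \<delta>(2) nonneg that by blast
    finally show ?thesis .
  qed
  with \<delta>(1) show ?thesis by blast
qed

lemma openin_sball:
  assumes "a \<in> X"
  shows "openin (star_topology X d) (sball X d a r)"
  unfolding openin_star_topology
proof (intro conjI ballI)
  fix y assume "y \<in> sball X d a r"
  then have y: "y \<in> X" "d a y < r" by (auto simp: sball_def)
  then obtain e where e: "e > 0" "\<forall>c. 0 \<le> c \<and> c < e \<longrightarrow> star (d a y) c < r"
    using t_definer_less_near_0[OF t_definer] nonneg assms by blast
  have "d a z < r" if "z \<in> X" "d y z < e" for z
  proof -
    have "d a z \<le> star (d a y) (d y z)"
      using triangle assms y(1) that(1) by blast
    also have "\<dots> < r"
      using e(2) nonneg y(1) that by blast
    finally show ?thesis .
  qed
  with e(1) show "\<exists>e>0. sball X d y e \<subseteq> sball X d a r"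
    by (auto simp: sball_def)
qed (auto simp: sball_def)

subsection \<open>Compactness implies completeness and total boundedness\<close>

lemma compact_space_finite_ball_cover:
  assumes "compact_space (star_topology X d)" and "\<forall>x\<in>X. e x > 0"
  obtains F where "finite F" "F \<subseteq> X" "X \<subseteq> (\<Union>x\<in>F. sball X d x (e x))"
proof -
  let ?B = "(\<lambda>x. sball X d x (e x)) ` X"
  have "(\<forall>U\<in>?B. openin (star_topology X d) U) \<and> X \<subseteq> \<Union>?B"
    using openin_sball assms(2) by (auto simp: sball_def)
  then have "finitely_covered ?B X"
    by (rule assms(1)[unfolded compact_space_star_topology, rule_format])
  then obtain \<F> where "finite \<F>" "\<F> \<subseteq> ?B" "X \<subseteq> \<Union>\<F>"
    unfolding finitely_covered_def by blast
  moreover obtain F where "F \<subseteq> X" "finite F" "\<F> = (\<lambda>x. sball X d x (e x)) ` F"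
    using finite_subset_image[OF \<open>finite \<F>\<close> \<open>\<F> \<subseteq> ?B\<close>] by blast
  ultimately show thesis
    using that by blast
qed

lemma compact_imp_totally_bounded:
  assumes "compact_space (star_topology X d)"
  shows "star_totally_bounded X d"
  unfolding star_totally_bounded_def
proof (intro allI impI)
  fix \<epsilon> :: real assume "\<epsilon> > 0"
  then obtain F where "finite F" "F \<subseteq> X" "X \<subseteq> (\<Union>x\<in>F. sball X d x \<epsilon>)"
    using compact_space_finite_ball_cover[OF assms, of "\<lambda>_. \<epsilon>"] by blast
  then show "\<exists>F. finite F \<and> F \<subseteq> X \<and> X = (\<Union>x\<in>F. sball X d x \<epsilon>)"
    by (intro exI[of _ F]) (auto simp: sball_def)
qed

lemma compact_imp_cluster_point:
  fixes s :: "nat \<Rightarrow> 'a"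
  assumes "compact_space (star_topology X d)" and "\<forall>n. s n \<in> X"
  shows "\<exists>x\<in>X. \<forall>e>0. \<forall>k. \<exists>n\<ge>k. d x (s n) < e"
proof (rule ccontr)
  assume "\<not> ?thesis"
  then have "\<forall>x\<in>X. \<exists>e>0. \<exists>k. \<forall>n\<ge>k. e \<le> d x (s n)"
    by (auto simp: not_less)
  then obtain e k where e: "\<forall>x\<in>X. e x > 0" and k: "\<forall>x\<in>X. \<forall>n\<ge>k x. e x \<le> d x (s n)"
    by metis
  obtain F where F: "finite F" "F \<subseteq> X" "X \<subseteq> (\<Union>x\<in>F. sball X d x (e x))"
    using compact_space_finite_ball_cover[OF assms(1) e] by blast
  define K where "K = (\<Sum>x\<in>F. k x)"
  obtain x where "x \<in> F" "s K \<in> sball X d x (e x)"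
    using F(3) assms(2) by blast
  moreover have "k x \<le> K"
    unfolding K_def using \<open>x \<in> F\<close> F(1) by (simp add: member_le_sum)
  ultimately have "e x \<le> d x (s K)"
    using k F(2) by blast
  with \<open>s K \<in> sball X d x (e x)\<close> show False
    by (simp add: sball_def)
qed

lemma Cauchy_cluster_point_converges:
  assumes "star_Cauchy X d s" and "x \<in> X" and "\<forall>e>0. \<forall>k. \<exists>n\<ge>k. d x (s n) < e"
  shows "star_converges X d s x"
  unfolding star_converges_def
proof (intro allI impI)
  fix \<epsilon> :: real assume "\<epsilon> > 0"
  then obtain \<delta> where \<delta>: "\<delta> > 0" "\<forall>x\<in>X. \<forall>y\<in>X. \<forall>z\<in>X. d x z < \<delta> \<longrightarrow> d z y < \<delta> \<longrightarrow> d x y < \<epsilon>"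
    using triangle_small by blast
  obtain k where k: "\<forall>m\<ge>k. \<forall>n\<ge>k. d (s n) (s m) < \<delta>"
    using assms(1) \<delta>(1) unfolding star_Cauchy_def by blast
  obtain n where "n \<ge> k" "d x (s n) < \<delta>"
    using assms(3) \<delta>(1) by blast
  have "d x (s m) < \<epsilon>" if "m \<ge> k" for m
  proof -
    have "d (s n) (s m) < \<delta>"
      using k \<open>n \<ge> k\<close> that by blast
    moreover have "s n \<in> X" "s m \<in> X"
      using assms(1) unfolding star_Cauchy_def by blast+
    ultimately show ?thesis
      using \<delta>(2) assms(2) \<open>d x (s n) < \<delta>\<close> by blast
  qed
  then show "\<exists>k. \<forall>m\<ge>k. d x (s m) < \<epsilon>" by blast
qed

lemma compact_imp_complete:
  assumes "compact_space (star_topology X d)"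
  shows "star_complete X d"
  unfolding star_complete_def
proof (intro allI impI)
  fix s assume "star_Cauchy X d s"
  then have "\<forall>n. s n \<in> X"
    unfolding star_Cauchy_def by blast
  then obtain x where "x \<in> X" "\<forall>e>0. \<forall>k. \<exists>n\<ge>k. d x (s n) < e"
    using compact_imp_cluster_point[OF assms] by blast
  then show "\<exists>x\<in>X. star_converges X d s x"
    using Cauchy_cluster_point_converges[OF \<open>star_Cauchy X d s\<close>] by blast
qed

subsection \<open>Completeness and total boundedness imply compactness\<close>

lemma not_finitely_covered_Int_sball:
  assumes "star_totally_bounded X d" and "A \<subseteq> X" and "\<not> finitely_covered \<U> A" and "r > 0"
  obtains c where "c \<in> X" "\<not> finitely_covered \<U> (A \<inter> sball X d c r)"
proof (rule ccontr)
  assume "\<not> thesis"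
  obtain G where G: "finite G" "G \<subseteq> X" "X = (\<Union>c\<in>G. sball X d c r)"
    using assms(1,4) unfolding star_totally_bounded_def by metis
  have "\<forall>c\<in>G. finitely_covered \<U> (A \<inter> sball X d c r)"
    using that \<open>\<not> thesis\<close> G(2) by blast
  then have "finitely_covered \<U> (\<Union>c\<in>G. A \<inter> sball X d c r)"
    by (rule finitely_covered_UN[OF G(1)])
  moreover have "(\<Union>c\<in>G. A \<inter> sball X d c r) = A"
    using subset_trans[OF assms(2) equalityD1[OF G(3)]] by blast
  ultimately show False
    using assms(3) by simp
qed

lemma nested_not_finitely_covered:
  assumes "star_totally_bounded X d" and "\<not> finitely_covered \<U> X"
  obtains A where "\<forall>n. A (Suc n) \<subseteq> A n"
    and "\<forall>n. A n \<subseteq> X \<and> \<not> finitely_covered \<U> (A n)"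
    and "\<forall>n. \<exists>c\<in>X. A n \<subseteq> sball X d c (1 / Suc n)"
proof -
  let ?P = "\<lambda>n B. B \<subseteq> X \<and> \<not> finitely_covered \<U> B \<and> (\<exists>c\<in>X. B \<subseteq> sball X d c (1 / Suc n))"
  have refine: "\<exists>C. ?P n C \<and> C \<subseteq> B" if B: "B \<subseteq> X" "\<not> finitely_covered \<U> B" for n B
  proof -
    obtain c where "c \<in> X" "\<not> finitely_covered \<U> (B \<inter> sball X d c (1 / Suc n))"
      using not_finitely_covered_Int_sball[OF assms(1) B, of "1 / Suc n"] by auto
    with B(1) show ?thesis
      by blast
  qed
  have "\<exists>A. \<forall>n. ?P n (A n) \<and> A (Suc n) \<subseteq> A n"
  proof (rule dependent_nat_choice)
    show "\<exists>C. ?P 0 C"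
      using refine[of X 0] assms(2) by blast
    show "\<exists>C. ?P (Suc n) C \<and> C \<subseteq> B" if "?P n B" for B n
      using refine that by blast
  qed
  with that show thesis
    by blast
qed

lemma diameter_vanishes_if_sub_sball:
  assumes "\<forall>n. A n \<subseteq> X" and "\<forall>n. \<exists>c\<in>X. A n \<subseteq> sball X d c (1 / Suc n)" and "\<epsilon> > 0"
  shows "\<exists>N. \<forall>y\<in>A N. \<forall>z\<in>A N. d y z < \<epsilon>"
proof -
  obtain \<delta> where \<delta>: "\<delta> > 0" "\<forall>x\<in>X. \<forall>y\<in>X. \<forall>z\<in>X. d x z < \<delta> \<longrightarrow> d z y < \<delta> \<longrightarrow> d x y < \<epsilon>"
    using triangle_small[OF assms(3)] by blast
  obtain N where "1 / Suc N < \<delta>"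
    using reals_Archimedean[OF \<delta>(1)] by (auto simp: inverse_eq_divide)
  moreover obtain c where "c \<in> X" "A N \<subseteq> sball X d c (1 / Suc N)"
    using assms(2) by blast
  ultimately have "d c y < \<delta>" if "y \<in> A N" for y
    using that by (auto simp: sball_def)
  then have "d y z < \<epsilon>" if "y \<in> A N" "z \<in> A N" for y z
    using \<delta>(2) \<open>c \<in> X\<close> assms(1) commute[of c] that by (metis subsetD)
  then show ?thesis by blast
qed

lemma complete_nested_limit:
  assumes "star_complete X d" and "\<forall>n. A (Suc n) \<subseteq> A n" and "\<forall>n. A n \<noteq> {} \<and> A n \<subseteq> X"
    and "\<forall>\<epsilon>>0. \<exists>N. \<forall>y\<in>A N. \<forall>z\<in>A N. d y z < \<epsilon>"
  shows "\<exists>p\<in>X. \<forall>\<rho>>0. \<exists>n. A n \<subseteq> sball X d p \<rho>"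
proof -
  have mono: "A m \<subseteq> A n" if "n \<le> m" for m n
    using lift_Suc_antimono_le[of A] assms(2) that by blast
  define a where "a n = (SOME y. y \<in> A n)" for n
  have a: "a n \<in> A n" "a n \<in> X" for n
    unfolding a_def using assms(3) some_in_eq by blast+
  have "star_Cauchy X d a"
    unfolding star_Cauchy_def
  proof (intro conjI allI impI a(2))
    fix \<epsilon> :: real assume "\<epsilon> > 0"
    then obtain N where "\<forall>y\<in>A N. \<forall>z\<in>A N. d y z < \<epsilon>"
      using assms(4) by blast
    then show "\<exists>k. \<forall>m\<ge>k. \<forall>n\<ge>k. d (a n) (a m) < \<epsilon>"
      using a(1) mono by blast
  qed
  then obtain p where p: "p \<in> X" "star_converges X d a p"
    using assms(1) unfolding star_complete_def by blast
  have "\<exists>n. A n \<subseteq> sball X d p \<rho>" if \<rho>: "\<rho> > 0" for \<rho>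
  proof -
    obtain \<delta> where \<delta>: "\<delta> > 0" "\<forall>x\<in>X. \<forall>y\<in>X. \<forall>z\<in>X. d x z < \<delta> \<longrightarrow> d z y < \<delta> \<longrightarrow> d x y < \<rho>"
      using triangle_small[OF \<rho>] by blast
    obtain N where N: "\<forall>y\<in>A N. \<forall>z\<in>A N. d y z < \<delta>"
      using assms(4) \<delta>(1) by blast
    obtain k where k: "\<forall>n\<ge>k. d p (a n) < \<delta>"
      using p(2) \<delta>(1) unfolding star_converges_def by blast
    let ?n = "max N k"
    have "d p y < \<rho>" if "y \<in> A ?n" for y
    proof -
      have "a ?n \<in> A N" "y \<in> A N" "y \<in> X"
        using a(1) mono[of N ?n] that assms(3) by auto
      then have "d (a ?n) y < \<delta>"
        using N by blast
      moreover have "d p (a ?n) < \<delta>"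
        using k by simp
      ultimately show ?thesis
        using \<delta>(2) p(1) a(2) \<open>y \<in> X\<close> by blast
    qed
    then show ?thesis
      using assms(3) by (auto simp: sball_def)
  qed
  with p(1) show ?thesis by blast
qed

lemma complete_totally_bounded_imp_compact:
  assumes "star_complete X d" and "star_totally_bounded X d"
  shows "compact_space (star_topology X d)"
  unfolding compact_space_star_topology
proof (intro allI impI, elim conjE, rule ccontr)
  fix \<U> assume op: "\<forall>U\<in>\<U>. openin (star_topology X d) U" and "X \<subseteq> \<Union>\<U>"
    and "\<not> finitely_covered \<U> X"
  then obtain A where A: "\<forall>n. A (Suc n) \<subseteq> A n" "\<forall>n. A n \<subseteq> X \<and> \<not> finitely_covered \<U> (A n)"
    "\<forall>n. \<exists>c\<in>X. A n \<subseteq> sball X d c (1 / Suc n)"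
    using nested_not_finitely_covered[OF assms(2)] by blast
  have "\<forall>n. A n \<noteq> {} \<and> A n \<subseteq> X"
    using A(2) unfolding finitely_covered_def by blast
  moreover have "\<forall>\<epsilon>>0. \<exists>N. \<forall>y\<in>A N. \<forall>z\<in>A N. d y z < \<epsilon>"
    using diameter_vanishes_if_sub_sball[OF _ A(3)] A(2) by blast
  ultimately obtain p where "p \<in> X" and p: "\<forall>\<rho>>0. \<exists>n. A n \<subseteq> sball X d p \<rho>"
    using complete_nested_limit[OF assms(1) A(1)] by blast
  then obtain u where "u \<in> \<U>" "p \<in> u"
    using \<open>X \<subseteq> \<Union>\<U>\<close> by blast
  then obtain \<rho> where "\<rho> > 0" "sball X d p \<rho> \<subseteq> u"
    using op unfolding openin_star_topology by blast
  with p obtain n where "A n \<subseteq> u"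
    by blast
  then have "finitely_covered \<U> (A n)"
    unfolding finitely_covered_def using \<open>u \<in> \<U>\<close> by (intro exI[of _ "{u}"]) auto
  with A(2) show False
    by blast
qed

end

theorem theorem4p6:
  fixes star :: "real \<Rightarrow> real \<Rightarrow> real" and X :: "'a set" and d :: "'a \<Rightarrow> 'a \<Rightarrow> real"
  assumes "t_definer star" and "X \<noteq> {}" and "star_metric star X d"
  shows "compact_space (star_topology X d) \<longleftrightarrow> star_complete X d \<and> star_totally_bounded X d"
proof -
  interpret star_metric_space star X d
    using assms(1,3) by unfold_locales
  show ?thesis
    using compact_imp_totally_bounded compact_imp_complete complete_totally_bounded_imp_compact
    by blast
qed

end
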